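(* The Lipschitz quaternionic modular group $PSL(2,\mathfrak L)$ is a subgroup of index $3$ of the Hurwitz quaternionic modular group $PSL(2,\mathfrak H)$.
   Context: $\mathbb H$ is the real quaternions. Quaternionic matrices $\begin{pmatrix}a&b\\c&d\end{pmatrix}$ act by $q\mapsto(aq+b)(cq+d)^{-1}$, and matrices differing by a nonzero real scalar are identified. Let $\Im\mathbb H(\mathbb Z)=\{b\mathbf i+c\mathbf j+d\mathbf k: b,c,d\in\mathbb Z\}$; for $\omega\in\Im\mathbb H(\mathbb Z)$ let $\tau_\omega(q)=q+\omega$ (matrix $\begin{pmatrix}1&\omega\\0&1\end{pmatrix}$), and let $T(q)=q^{-1}$ (matrix $\begin{pmatrix}0&1\\1&0\end{pmatrix}$). $PSL(2,\mathfrak L)$ is the group generated by $T$ and all $\tau_\omega$, $\omega\in\Im\mathbb H(\mathbb Z)$. The Hurwitz units are the 24 quaternions $\pm1,\pm\mathbf i,\pm\mathbf j,\pm\mathbf k,\frac12(\pm1\pm\mathbf i\pm\mathbf j\pm\mathbf k)$. For a Hurwitz unit $u$ let $D_u=\begin{pmatrix}u&0\\0&u\end{pmatrix}$, acting by $q\mapsto uqu^{-1}$; $\mathcal U(\mathfrak H)=\{D_u\}$ is a group of 12 transformations. $PSL(2,\mathfrak H)$ is the group generated by $T$, all $\tau_\omega$ ($\omega\in\Im\mathbb H(\mathbb Z)$) and $\mathcal U(\mathfrak H)$. *)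

theory Defs
  imports Complex_Main "HOL-Algebra.Generated_Groups" "HOL-Algebra.Coset"
begin

datatype quat = Quat (qre: real) (qi: real) (qj: real) (qk: real)

definition qadd :: "quat \<Rightarrow> quat \<Rightarrow> quat" where
  "qadd p q = Quat (qre p + qre q) (qi p + qi q) (qj p + qj q) (qk p + qk q)"

text \<open>Hamilton product (i^2 = j^2 = k^2 = ijk = -1).\<close>
definition qmul :: "quat \<Rightarrow> quat \<Rightarrow> quat" where
  "qmul p q = Quat
     (qre p * qre q - qi p * qi q - qj p * qj q - qk p * qk q)
     (qre p * qi q + qi p * qre q + qj p * qk q - qk p * qj q)
     (qre p * qj q - qi p * qk q + qj p * qre q + qk p * qi q)
     (qre p * qk q + qi p * qj q - qj p * qi q + qk p * qre q)"

definition qscale :: "real \<Rightarrow> quat \<Rightarrow> quat" where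
  "qscale r q = Quat (r * qre q) (r * qi q) (r * qj q) (r * qk q)"

definition q0 :: quat where "q0 = Quat 0 0 0 0"
definition q1 :: quat where "q1 = Quat 1 0 0 0"

definition ImHZ :: "quat set" where
  "ImHZ = {Quat 0 (of_int b) (of_int c) (of_int d) | b c d. True}"

definition hurwitz_units :: "quat set" where
  "hurwitz_units =
     {Quat s 0 0 0 | s. s \<in> {1, -1}} \<union> {Quat 0 s 0 0 | s. s \<in> {1, -1}} \<union>
     {Quat 0 0 s 0 | s. s \<in> {1, -1}} \<union> {Quat 0 0 0 s | s. s \<in> {1, -1}} \<union>
     {Quat a b c d | a b c d. a \<in> {1/2, -1/2} \<and> b \<in> {1/2, -1/2} \<and>
                              c \<in> {1/2, -1/2} \<and> d \<in> {1/2, -1/2}}"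

text \<open>A matrix (a b; c d) is represented as the tuple (a, b, c, d).\<close>
type_synonym qmat = "quat \<times> quat \<times> quat \<times> quat"

definition mmul :: "qmat \<Rightarrow> qmat \<Rightarrow> qmat" where
  "mmul M N = (case M of (a, b, c, d) \<Rightarrow> case N of (a', b', c', d') \<Rightarrow>
     (qadd (qmul a a') (qmul b c'), qadd (qmul a b') (qmul b d'),
      qadd (qmul c a') (qmul d c'), qadd (qmul c b') (qmul d d')))"

definition mscale :: "real \<Rightarrow> qmat \<Rightarrow> qmat" where
  "mscale r M = (case M of (a, b, c, d) \<Rightarrow> (qscale r a, qscale r b, qscale r c, qscale r d))"

definition mid :: qmat where "mid = (q1, q0, q0, q1)"

definition pclass :: "qmat \<Rightarrow> qmat set" where
  "pclass M = {N. \<exists>r::real. r \<noteq> 0 \<and> N = mscale r M}"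

definition pmul :: "qmat set \<Rightarrow> qmat set \<Rightarrow> qmat set" where
  "pmul X Y = pclass (mmul (SOME A. A \<in> X) (SOME B. B \<in> Y))"

definition PMat :: "qmat set monoid" where
  "PMat = \<lparr>carrier = range pclass, mult = pmul, one = pclass mid\<rparr>"

definition PGL :: "qmat set monoid" where
  "PGL = units_of PMat"

definition tau :: "quat \<Rightarrow> qmat" where "tau w = (q1, w, q0, q1)"
definition Tm :: qmat where "Tm = (q0, q1, q1, q0)"
definition Dm :: "quat \<Rightarrow> qmat" where "Dm u = (u, q0, q0, u)"

definition PSL2_Lipschitz :: "qmat set set" where
  "PSL2_Lipschitz = generate PGL (pclass ` ({Tm} \<union> tau ` ImHZ))"

definition PSL2_Hurwitz :: "qmat set set" where
  "PSL2_Hurwitz = generate PGL (pclass ` ({Tm} \<union> tau ` ImHZ \<union> Dm ` hurwitz_units))"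

definition PSL2H_grp :: "qmat set monoid" where
  "PSL2H_grp = PGL\<lparr>carrier := PSL2_Hurwitz\<rparr>"

end

theory Submission
  imports Defs
begin

text \<open>Let \<open>\<zeta> = (1 + i + j + k)/2\<close>, a Hurwitz unit with \<open>\<zeta>\<^sup>3 = -1\<close> whose conjugation
  cycles \<open>i, j, k\<close>. Every Hurwitz unit is a Lipschitz unit \<open>\<plusminus>1, \<plusminus>i, \<plusminus>j, \<plusminus>k\<close> times a power
  of \<open>\<zeta>\<close>, and \<open>D\<^sub>u\<close> for a Lipschitz unit \<open>u\<close> is already a word in \<open>T\<close> and the \<open>\<tau>\<^sub>\<omega>\<close>,
  because \<open>(T \<tau>\<^sub>u)\<^sup>3 = D\<^sub>u\<close> when \<open>u\<^sup>2 = -1\<close>. As \<open>D\<^sub>\<zeta>\<close> commutes with \<open>T\<close> and conjugates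
  each \<open>\<tau>\<^sub>\<omega>\<close> into another translation by an integral imaginary quaternion, every Hurwitz word
  can be rewritten as a Lipschitz word times \<open>D\<^sub>\<zeta>\<^sup>e\<close> with \<open>e < 3\<close>: there are at most
  three cosets. They are distinct because the matrices of Lipschitz words have Lipschitz
  entries and satisfy \<open>Re(a d\<^sup>* + b c\<^sup>*) = 1\<close>; for a real multiple \<open>r D\<^sub>\<zeta>\<^sup>n\<close> with \<open>n\<close> not
  divisible by \<open>3\<close> this forces \<open>r = \<plusminus>1\<close>, and then the real part of its diagonal entries is
  \<open>\<plusminus>1/2\<close>, not an integer.\<close>

lemma quat_eqI:
  "qre p = qre q \<Longrightarrow> qi p = qi q \<Longrightarrow> qj p = qj q \<Longrightarrow> qk p = qk q \<Longrightarrow> p = q"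
  by (cases p; cases q) auto

instantiation quat :: ring_1
begin
definition zero_quat_def: "0 = q0"
definition one_quat_def: "1 = q1"
definition plus_quat_def: "p + q = qadd p q"
definition times_quat_def: "p * q = qmul p q"
definition uminus_quat_def: "- q = Quat (- qre q) (- qi q) (- qj q) (- qk q)"
definition minus_quat_def: "(p::quat) - q = p + - q"
instance
  by standard (auto intro!: quat_eqI simp: zero_quat_def one_quat_def plus_quat_def
     times_quat_def uminus_quat_def minus_quat_def qadd_def qmul_def q0_def q1_def algebra_simps)
end

lemma quat_components [simp]:
  "qre (p + q) = qre p + qre q" "qi (p + q) = qi p + qi q"
  "qj (p + q) = qj p + qj q" "qk (p + q) = qk p + qk q"
  "qre (p * q) = qre p * qre q - qi p * qi q - qj p * qj q - qk p * qk q"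
  "qi (p * q) = qre p * qi q + qi p * qre q + qj p * qk q - qk p * qj q"
  "qj (p * q) = qre p * qj q - qi p * qk q + qj p * qre q + qk p * qi q"
  "qk (p * q) = qre p * qk q + qi p * qj q - qj p * qi q + qk p * qre q"
  "qre (0::quat) = 0" "qi (0::quat) = 0" "qj (0::quat) = 0" "qk (0::quat) = 0"
  "qre (1::quat) = 1" "qi (1::quat) = 0" "qj (1::quat) = 0" "qk (1::quat) = 0"
  "qre (- q) = - qre q" "qi (- q) = - qi q" "qj (- q) = - qj q" "qk (- q) = - qk q"
  "qre (qscale r q) = r * qre q" "qi (qscale r q) = r * qi q"
  "qj (qscale r q) = r * qj q" "qk (qscale r q) = r * qk q"
  by (simp_all add: zero_quat_def one_quat_def plus_quat_def times_quat_def
     uminus_quat_def qadd_def qmul_def q0_def q1_def qscale_def)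

lemma qops_eq [simp]: "qadd p q = p + q" "qmul p q = p * q" "q0 = 0" "q1 = 1"
  by (simp_all add: zero_quat_def one_quat_def plus_quat_def times_quat_def)

lemma Quat_mult:
  "Quat a b c d * Quat a' b' c' d' =
     Quat (a*a' - b*b' - c*c' - d*d') (a*b' + b*a' + c*d' - d*c')
          (a*c' - b*d' + c*a' + d*b') (a*d' + b*c' - c*b' + d*a')"
  by (rule quat_eqI) simp_all

lemma Quat_one: "(1::quat) = Quat 1 0 0 0"
  and Quat_uminus: "- Quat a b c d = Quat (- a) (- b) (- c) (- d)"
  by (rule quat_eqI; simp)+

lemma qscale_mult: "qscale r p * qscale s q = qscale (r * s) (p * q)"
  and qscale_add: "qscale r (p + q) = qscale r p + qscale r q"
  and qscale_qscale: "qscale r (qscale s q) = qscale (r * s) q"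
  and qscale_one [simp]: "qscale 1 q = q"
  and qscale_zero [simp]: "qscale r 0 = 0"
  by (rule quat_eqI; simp add: algebra_simps)+

definition qcnj :: "quat \<Rightarrow> quat" where
  "qcnj q = Quat (qre q) (- qi q) (- qj q) (- qk q)"

definition qinner :: "quat \<Rightarrow> quat \<Rightarrow> real" where
  "qinner p q = qre p * qre q + qi p * qi q + qj p * qj q + qk p * qk q"

lemma mult_qcnj: "q * qcnj q = Quat (qinner q q) 0 0 0" "qcnj q * q = Quat (qinner q q) 0 0 0"
  by (rule quat_eqI; simp add: qcnj_def qinner_def algebra_simps)+

lemma qinner_qscale: "qinner (qscale r q) (qscale r q) = r\<^sup>2 * qinner q q"
  by (simp add: qinner_def power2_eq_square algebra_simps)

section \<open>Projective matrices and words\<close>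

lemma mmul_assoc: "mmul (mmul A B) C = mmul A (mmul B C)"
  by (cases A; cases B; cases C) (simp add: mmul_def algebra_simps)

lemma mmul_mid [simp]: "mmul mid A = A" "mmul A mid = A"
  by (cases A; simp add: mmul_def mid_def)+

lemma mscale_mmul: "mmul (mscale r A) (mscale s B) = mscale (r * s) (mmul A B)"
  by (cases A; cases B) (simp add: mmul_def mscale_def qscale_mult qscale_add)

lemma mscale_mscale: "mscale r (mscale s A) = mscale (r * s) A"
  by (cases A) (simp add: mscale_def qscale_qscale)

lemma mscale_one [simp]: "mscale 1 A = A"
  by (cases A) (simp add: mscale_def)

lemma pclass_self: "A \<in> pclass A"
  unfolding pclass_def by (auto intro: exI[of _ 1])

lemma pclass_mscale: "r \<noteq> 0 \<Longrightarrow> pclass (mscale r A) = pclass A"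
  unfolding pclass_def
proof (intro Collect_cong iffI; elim exE conjE)
  fix N s assume "r \<noteq> 0" "s \<noteq> 0" "N = mscale s (mscale r A)"
  then show "\<exists>t. t \<noteq> 0 \<and> N = mscale t A" by (metis mscale_mscale mult_eq_0_iff)
next
  fix N s assume "r \<noteq> 0" "s \<noteq> 0" "N = mscale s A"
  then have "s / r \<noteq> 0 \<and> N = mscale (s / r) (mscale r A)" by (simp add: mscale_mscale)
  then show "\<exists>t. t \<noteq> 0 \<and> N = mscale t (mscale r A)" by blast
qed

lemma pclass_eq_iff: "pclass A = pclass B \<longleftrightarrow> (\<exists>r. r \<noteq> 0 \<and> A = mscale r B)"
proof
  assume "pclass A = pclass B"
  then show "\<exists>r. r \<noteq> 0 \<and> A = mscale r B"
    using pclass_self[of A] unfolding pclass_def by auto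
qed (auto simp: pclass_mscale)

lemma pmul_pclass [simp]: "pmul (pclass A) (pclass B) = pclass (mmul A B)"
proof -
  obtain r where r: "r \<noteq> 0" "(SOME X. X \<in> pclass A) = mscale r A"
    using someI[of "\<lambda>X. X \<in> pclass A", OF pclass_self] unfolding pclass_def by blast
  obtain s where s: "s \<noteq> 0" "(SOME X. X \<in> pclass B) = mscale s B"
    using someI[of "\<lambda>X. X \<in> pclass B", OF pclass_self] unfolding pclass_def by blast
  show ?thesis
    unfolding pmul_def r s mscale_mmul using r s by (simp add: pclass_mscale)
qed

lemma monoid_PMat: "monoid PMat"
  by unfold_locales (auto simp: PMat_def mmul_assoc)

lemma group_PGL: "group PGL"
  unfolding PGL_def by (rule monoid.units_group[OF monoid_PMat])

lemma PGL_mult [simp]: "mult PGL = pmul" and PGL_one [simp]: "one PGL = pclass mid"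
  unfolding PGL_def units_of_mult units_of_one by (simp_all add: PMat_def)

lemma pclass_in_PGL:
  assumes "mmul A B = mid" "mmul B A = mid"
  shows "pclass A \<in> carrier PGL"
proof -
  have "pmul (pclass B) (pclass A) = pclass mid" "pmul (pclass A) (pclass B) = pclass mid"
    using assms by simp_all
  then show ?thesis
    unfolding PGL_def units_of_carrier Units_def PMat_def
    by (simp only: partial_object.simps monoid.simps) blast
qed

lemma inv_pclass:
  assumes "mmul A B = mid" "mmul B A = mid"
  shows "inv\<^bsub>PGL\<^esub> (pclass A) = pclass B"
  using assms by (intro group.inv_equality[OF group_PGL]) (auto intro: pclass_in_PGL)

lemma pclass_gens_in_PGL:
  assumes "\<And>g. g \<in> G \<Longrightarrow> \<exists>g'\<in>G. mmul g g' = mid \<and> mmul g' g = mid"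
  shows "pclass ` G \<subseteq> carrier PGL"
  using assms pclass_in_PGL by blast

inductive_set words :: "qmat set \<Rightarrow> qmat set" for G :: "qmat set" where
  words_mid: "mid \<in> words G"
| words_snoc: "M \<in> words G \<Longrightarrow> g \<in> G \<Longrightarrow> mmul M g \<in> words G"

lemma words_gen: "g \<in> G \<Longrightarrow> g \<in> words G"
  using words_snoc[OF words_mid] by simp

lemma words_mmul: "N \<in> words G \<Longrightarrow> M \<in> words G \<Longrightarrow> mmul M N \<in> words G"
  by (induction N rule: words.induct) (auto simp: mmul_assoc[symmetric] intro: words.intros)

lemma pclass_words_subset_generate:
  assumes "pclass ` G \<subseteq> carrier PGL"
  shows "pclass ` words G \<subseteq> generate PGL (pclass ` G)"
proof clarify
  fix M assume "M \<in> words G"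
  then show "pclass M \<in> generate PGL (pclass ` G)"
  proof (induction M rule: words.induct)
    case words_mid
    show ?case using generate.one[of PGL] by simp
  next
    case (words_snoc M g)
    have "pclass g \<in> generate PGL (pclass ` G)"
      using words_snoc.hyps(2) by (intro generate.incl) simp
    from generate.eng[OF words_snoc.IH this] show ?case by simp
  qed
qed

lemma generate_pclass_eq_words:
  assumes inverses: "\<And>g. g \<in> G \<Longrightarrow> \<exists>g'\<in>G. mmul g g' = mid \<and> mmul g' g = mid"
  shows "generate PGL (pclass ` G) = pclass ` words G"
proof
  show "generate PGL (pclass ` G) \<subseteq> pclass ` words G"
  proof
    fix x assume "x \<in> generate PGL (pclass ` G)"
    then show "x \<in> pclass ` words G"
    proof (induction x rule: generate.induct)
      case one
      show ?case using words_mid by simp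
    next
      case (incl h)
      then show ?case using words_gen by auto
    next
      case (inv h)
      then obtain g g' where "h = pclass g" "g' \<in> G" "mmul g g' = mid" "mmul g' g = mid"
        using inverses by blast
      then show ?case using inv_pclass words_gen by auto
    next
      case (eng h1 h2)
      then show ?case using words_mmul by auto
    qed
  qed
  show "pclass ` words G \<subseteq> generate PGL (pclass ` G)"
    by (intro pclass_words_subset_generate pclass_gens_in_PGL inverses)
qed

section \<open>Lipschitz and Hurwitz units\<close>

definition lipschitz_units :: "quat set" where
  "lipschitz_units = {Quat 1 0 0 0, Quat (-1) 0 0 0, Quat 0 1 0 0, Quat 0 (-1) 0 0,
     Quat 0 0 1 0, Quat 0 0 (-1) 0, Quat 0 0 0 1, Quat 0 0 0 (-1)}"

definition zeta :: quat where "zeta = Quat (1/2) (1/2) (1/2) (1/2)"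

definition ijk_rotate :: "quat \<Rightarrow> quat" where
  "ijk_rotate q = Quat (qre q) (qk q) (qi q) (qj q)"

lemma zeta_mult_commute: "zeta * q = ijk_rotate q * zeta"
  by (rule quat_eqI) (simp_all add: zeta_def ijk_rotate_def algebra_simps)

lemma zeta_pow_mult_commute: "zeta ^ n * q = (ijk_rotate ^^ n) q * zeta ^ n"
proof (induction n arbitrary: q)
  case (Suc n)
  have "zeta ^ Suc n * q = (zeta ^ n * ijk_rotate q) * zeta"
    by (simp only: power_Suc2 mult.assoc zeta_mult_commute)
  also have "\<dots> = (ijk_rotate ^^ n) (ijk_rotate q) * zeta ^ Suc n"
    by (simp only: Suc mult.assoc power_Suc2)
  finally show ?case by (simp only: funpow_Suc_right comp_def)
qed simp

lemma zeta_cube: "zeta ^ 3 = -1"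
  by (rule quat_eqI) (simp_all add: zeta_def power3_eq_cube)

lemma zeta_pow_mod_3: "zeta ^ n = (-1) ^ (n div 3) * zeta ^ (n mod 3)"
proof -
  have "zeta ^ n = zeta ^ (3 * (n div 3) + n mod 3)"
    by simp
  also have "\<dots> = (zeta ^ 3) ^ (n div 3) * zeta ^ (n mod 3)"
    by (simp only: power_add power_mult)
  finally show ?thesis by (simp add: zeta_cube)
qed

lemma zeta_square: "zeta ^ 2 = Quat (- 1/2) (1/2) (1/2) (1/2)"
  by (simp add: zeta_def power2_eq_square Quat_mult)

lemma zeta_in_hurwitz_units: "zeta \<in> hurwitz_units"
  unfolding hurwitz_units_def zeta_def by blast

lemma funpow_closed: "(\<And>x. x \<in> A \<Longrightarrow> f x \<in> A) \<Longrightarrow> x \<in> A \<Longrightarrow> (f ^^ n) x \<in> A"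
  by (induction n) auto

lemma ImHZ_iff: "w \<in> ImHZ \<longleftrightarrow> qre w = 0 \<and> qi w \<in> \<int> \<and> qj w \<in> \<int> \<and> qk w \<in> \<int>"
proof
  assume "qre w = 0 \<and> qi w \<in> \<int> \<and> qj w \<in> \<int> \<and> qk w \<in> \<int>"
  moreover from this obtain b c d where "qi w = of_int b" "qj w = of_int c" "qk w = of_int d"
    by (meson Ints_cases)
  ultimately have "w = Quat 0 (of_int b) (of_int c) (of_int d)" by (intro quat_eqI) simp_all
  then show "w \<in> ImHZ" unfolding ImHZ_def by blast
qed (auto simp: ImHZ_def)

lemma ImHZ_uminus: "w \<in> ImHZ \<Longrightarrow> - w \<in> ImHZ"
  by (simp add: ImHZ_iff)

lemma ImHZ_ijk_rotate: "w \<in> ImHZ \<Longrightarrow> ijk_rotate w \<in> ImHZ"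
  by (simp add: ImHZ_iff ijk_rotate_def)

lemma lipschitz_units_uminus: "a \<in> lipschitz_units \<Longrightarrow> - a \<in> lipschitz_units"
  unfolding lipschitz_units_def by (elim insertE emptyE; simp add: Quat_uminus)

lemma lipschitz_units_mult_neg_one_power:
  "a \<in> lipschitz_units \<Longrightarrow> a * (- 1) ^ k \<in> lipschitz_units"
proof (induction k)
  case (Suc k)
  then show ?case
    using lipschitz_units_uminus[of "a * (- 1) ^ k"]
    by (simp only: power_Suc2 mult.assoc[symmetric] mult_minus_right mult_1_right)
qed simp

lemma lipschitz_units_ijk_rotate: "a \<in> lipschitz_units \<Longrightarrow> ijk_rotate a \<in> lipschitz_units"
  unfolding lipschitz_units_def by (elim insertE emptyE; simp add: ijk_rotate_def)

lemma half_units_mult_zeta_pow: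
  assumes "a \<in> {1/2, - 1/2}" "b \<in> {1/2, - 1/2}" "c \<in> {1/2, - 1/2}" "d \<in> {1/2, - 1/2}"
  shows "Quat a b c d * zeta \<in> lipschitz_units \<or> Quat a b c d * zeta ^ 2 \<in> lipschitz_units"
  using assms unfolding zeta_square unfolding lipschitz_units_def zeta_def
  by (elim insertE emptyE; hypsubst; simp add: Quat_mult)

lemma hurwitz_units_half_integral:
  assumes "v \<in> hurwitz_units" "v \<notin> lipschitz_units"
  obtains a b c d where "v = Quat a b c d"
    "a \<in> {1/2, - 1/2}" "b \<in> {1/2, - 1/2}" "c \<in> {1/2, - 1/2}" "d \<in> {1/2, - 1/2}"
  using assms unfolding hurwitz_units_def lipschitz_units_def
  by (elim UnE CollectE exE conjE) auto

lemma hurwitz_unit_decomp: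
  assumes "v \<in> hurwitz_units"
  shows "\<exists>a\<in>lipschitz_units. \<exists>f<3. v = a * zeta ^ f"
proof (cases "v \<in> lipschitz_units")
  case True
  moreover have "v = v * zeta ^ 0" by simp
  ultimately show ?thesis by (metis zero_less_numeral)
next
  case False
  with assms obtain a b c d where v: "v = Quat a b c d"
    and abcd: "a \<in> {1/2, - 1/2}" "b \<in> {1/2, - 1/2}" "c \<in> {1/2, - 1/2}" "d \<in> {1/2, - 1/2}"
    by (rule hurwitz_units_half_integral)
  have shift: "v = - (v * zeta ^ g) * zeta ^ f" if "g + f = 3" for g f
    using that by (simp add: mult.assoc power_add[symmetric] zeta_cube)
  have "v * zeta ^ 1 \<in> lipschitz_units \<or> v * zeta ^ 2 \<in> lipschitz_units"
    unfolding v using half_units_mult_zeta_pow[OF abcd] by (simp only: power_one_right)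
  then show ?thesis
  proof
    assume "v * zeta ^ 1 \<in> lipschitz_units"
    then show ?thesis
    proof (intro bexI exI conjI)
      show "(2::nat) < 3" by simp
      show "v = - (v * zeta ^ 1) * zeta ^ 2" by (rule shift) simp
    qed (rule lipschitz_units_uminus)
  next
    assume "v * zeta ^ 2 \<in> lipschitz_units"
    then show ?thesis
    proof (intro bexI exI conjI)
      show "(1::nat) < 3" by simp
      show "v = - (v * zeta ^ 2) * zeta ^ 1" by (rule shift) simp
    qed (rule lipschitz_units_uminus)
  qed
qed

lemma zeta_pow_mult_hurwitz_unit:
  assumes "v \<in> hurwitz_units"
  shows "\<exists>a\<in>lipschitz_units. \<exists>f<3. zeta ^ e * v = a * zeta ^ f"
proof -
  obtain a g where a: "a \<in> lipschitz_units" and v: "v = a * zeta ^ g"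
    using hurwitz_unit_decomp[OF assms] by blast
  define a' where "a' = (ijk_rotate ^^ e) a * (- 1) ^ ((e + g) div 3)"
  have "zeta ^ e * v = (zeta ^ e * a) * zeta ^ g"
    by (simp add: v mult.assoc)
  also have "\<dots> = (ijk_rotate ^^ e) a * zeta ^ (e + g)"
    by (simp only: zeta_pow_mult_commute[of e a] mult.assoc power_add)
  also have "\<dots> = a' * zeta ^ ((e + g) mod 3)"
    by (subst zeta_pow_mod_3) (simp add: a'_def mult.assoc)
  finally have "zeta ^ e * v = a' * zeta ^ ((e + g) mod 3)" .
  moreover have "a' \<in> lipschitz_units"
    unfolding a'_def
    by (intro lipschitz_units_mult_neg_one_power funpow_closed[OF lipschitz_units_ijk_rotate a])
  ultimately show ?thesis by force
qed

lemma hurwitz_units_qinner: "v \<in> hurwitz_units \<Longrightarrow> qinner v v = 1"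
  unfolding hurwitz_units_def
  by (elim UnE CollectE exE conjE insertE emptyE; hypsubst; simp add: qinner_def)

lemma hurwitz_units_qcnj: "v \<in> hurwitz_units \<Longrightarrow> qcnj v \<in> hurwitz_units"
  unfolding hurwitz_units_def
  by (elim UnE CollectE exE conjE;
      simp add: qcnj_def minus_equation_iff[where b = "1/2"] del: eq_divide_eq_numeral1; blast)

lemma Dm_mult: "mmul (Dm x) (Dm y) = Dm (x * y)"
  by (simp add: mmul_def Dm_def)

lemma Dm_one: "Dm 1 = mid"
  by (simp add: Dm_def mid_def)

lemma mscale_Dm: "mscale r (Dm q) = Dm (qscale r q)"
  by (simp add: mscale_def Dm_def)

lemma Dm_qcnj_inverse:
  assumes "qinner v v = 1"
  shows "mmul (Dm v) (Dm (qcnj v)) = mid" "mmul (Dm (qcnj v)) (Dm v) = mid"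
  using assms by (simp_all add: Dm_mult mult_qcnj Quat_one[symmetric] Dm_one)

lemma Tm_Tm: "mmul Tm Tm = mid"
  by (simp add: mmul_def Tm_def mid_def)

lemma tau_uminus_inverse: "mmul (tau w) (tau (- w)) = mid" "mmul (tau (- w)) (tau w) = mid"
  by (simp_all add: mmul_def tau_def mid_def)

lemma Dm_Tm_commute: "mmul (Dm v) Tm = mmul Tm (Dm v)"
  by (simp add: mmul_def Dm_def Tm_def)

lemma Dm_tau_commute: "v * w = w' * v \<Longrightarrow> mmul (Dm v) (tau w) = mmul (tau w') (Dm v)"
  by (simp add: mmul_def Dm_def tau_def)

definition lipschitz_gens :: "qmat set" where
  "lipschitz_gens = {Tm} \<union> tau ` ImHZ"

definition hurwitz_gens :: "qmat set" where
  "hurwitz_gens = lipschitz_gens \<union> Dm ` hurwitz_units"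

lemma lipschitz_gens_inverse:
  assumes "g \<in> lipschitz_gens"
  shows "\<exists>g'\<in>lipschitz_gens. mmul g g' = mid \<and> mmul g' g = mid"
  using assms unfolding lipschitz_gens_def
proof (elim UnE singletonE imageE)
  show "\<exists>g'\<in>{Tm} \<union> tau ` ImHZ. mmul g g' = mid \<and> mmul g' g = mid" if "g = Tm"
    using that Tm_Tm by blast
  show "\<exists>g'\<in>{Tm} \<union> tau ` ImHZ. mmul g g' = mid \<and> mmul g' g = mid"
    if "g = tau w" "w \<in> ImHZ" for w
    using that tau_uminus_inverse ImHZ_uminus by blast
qed

lemma hurwitz_gens_inverse:
  assumes "g \<in> hurwitz_gens"
  shows "\<exists>g'\<in>hurwitz_gens. mmul g g' = mid \<and> mmul g' g = mid"
  using assms unfolding hurwitz_gens_def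
proof (elim UnE imageE)
  show "\<exists>g'\<in>lipschitz_gens \<union> Dm ` hurwitz_units. mmul g g' = mid \<and> mmul g' g = mid"
    if "g \<in> lipschitz_gens"
    using lipschitz_gens_inverse[OF that] by blast
  show "\<exists>g'\<in>lipschitz_gens \<union> Dm ` hurwitz_units. mmul g g' = mid \<and> mmul g' g = mid"
    if "g = Dm v" "v \<in> hurwitz_units" for v
    using that Dm_qcnj_inverse[OF hurwitz_units_qinner] hurwitz_units_qcnj by blast
qed

lemma PSL2_Lipschitz_eq_words: "PSL2_Lipschitz = pclass ` words lipschitz_gens"
  unfolding PSL2_Lipschitz_def lipschitz_gens_def[symmetric]
  by (rule generate_pclass_eq_words[OF lipschitz_gens_inverse])

lemma PSL2_Hurwitz_eq_words: "PSL2_Hurwitz = pclass ` words hurwitz_gens"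
  unfolding PSL2_Hurwitz_def lipschitz_gens_def[symmetric] hurwitz_gens_def[symmetric]
  by (rule generate_pclass_eq_words[OF hurwitz_gens_inverse])

lemma Dm_imaginary_unit_in_words:
  assumes "w \<in> ImHZ" "w * w = - 1"
  shows "Dm w \<in> words lipschitz_gens"
proof -
  have "mmul (mmul (mmul (mmul (mmul (mmul mid Tm) (tau w)) Tm) (tau w)) Tm) (tau w) = Dm w"
    using assms(2) by (simp add: mmul_def Tm_def tau_def mid_def Dm_def algebra_simps)
  moreover have "Tm \<in> lipschitz_gens" "tau w \<in> lipschitz_gens"
    using assms(1) by (simp_all add: lipschitz_gens_def)
  ultimately show ?thesis
    by (metis words.intros)
qed

lemma Dm_lipschitz_unit_in_words:
  assumes "a \<in> lipschitz_units"
  shows "Dm a \<in> words lipschitz_gens"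
proof -
  have imag: "Dm w \<in> words lipschitz_gens"
    if "w \<in> {Quat 0 1 0 0, Quat 0 (-1) 0 0, Quat 0 0 1 0, Quat 0 0 (-1) 0, Quat 0 0 0 1, Quat 0 0 0 (-1)}"
    for w
    using that by (intro Dm_imaginary_unit_in_words; elim insertE emptyE;
        simp add: ImHZ_iff Quat_mult Quat_one Quat_uminus)
  have "Dm (Quat 0 1 0 0 * Quat 0 1 0 0) \<in> words lipschitz_gens"
    unfolding Dm_mult[symmetric] by (intro words_mmul imag) simp_all
  then have "Dm (Quat (-1) 0 0 0) \<in> words lipschitz_gens"
    by (simp add: Quat_mult)
  moreover have "Dm (Quat 1 0 0 0) \<in> words lipschitz_gens"
    using words_mid by (simp add: Dm_one[unfolded Quat_one])
  ultimately show ?thesis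
    using assms imag unfolding lipschitz_units_def by blast
qed

lemma hurwitz_word_decomp:
  assumes "M \<in> words hurwitz_gens"
  shows "\<exists>N\<in>words lipschitz_gens. \<exists>e<3. M = mmul N (Dm (zeta ^ e))"
  using assms
proof (induction M rule: words.induct)
  case words_mid
  have "mid = mmul mid (Dm (zeta ^ 0))" "(0::nat) < 3" by (simp_all add: Dm_one)
  then show ?case using words.words_mid by blast
next
  case (words_snoc M g)
  then obtain N e where N: "N \<in> words lipschitz_gens" "e < 3" and M: "M = mmul N (Dm (zeta ^ e))"
    by blast
  from words_snoc.hyps(2) consider "g = Tm" | w where "w \<in> ImHZ" "g = tau w"
    | v where "v \<in> hurwitz_units" "g = Dm v"
    unfolding hurwitz_gens_def lipschitz_gens_def by blast
  then show ?case
  proof cases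
    case 1
    have "mmul M g = mmul (mmul N Tm) (Dm (zeta ^ e))"
      by (simp add: 1 M mmul_assoc Dm_Tm_commute)
    moreover have "mmul N Tm \<in> words lipschitz_gens"
      using N(1) by (rule words.words_snoc) (simp add: lipschitz_gens_def)
    ultimately show ?thesis using N(2) by blast
  next
    case (2 w)
    let ?w' = "(ijk_rotate ^^ e) w"
    have "mmul M g = mmul (mmul N (tau ?w')) (Dm (zeta ^ e))"
      by (simp add: 2 M mmul_assoc Dm_tau_commute zeta_pow_mult_commute)
    moreover have "mmul N (tau ?w') \<in> words lipschitz_gens"
      using N(1) by (rule words.words_snoc)
        (simp add: lipschitz_gens_def funpow_closed[OF ImHZ_ijk_rotate 2(1)])
    ultimately show ?thesis using N(2) by blast
  next
    case (3 v)
    then obtain a f where a: "a \<in> lipschitz_units" "f < 3" "zeta ^ e * v = a * zeta ^ f"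
      using zeta_pow_mult_hurwitz_unit by blast
    have "mmul M g = mmul (mmul N (Dm a)) (Dm (zeta ^ f))"
      by (simp add: 3 M mmul_assoc Dm_mult a(3))
    moreover have "mmul N (Dm a) \<in> words lipschitz_gens"
      using Dm_lipschitz_unit_in_words[OF a(1)] N(1) by (rule words_mmul)
    ultimately show ?thesis using a(2) by blast
  qed
qed

section \<open>The invariant of Lipschitz words\<close>

definition is_lipschitz :: "quat \<Rightarrow> bool" where
  "is_lipschitz q \<longleftrightarrow> qre q \<in> \<int> \<and> qi q \<in> \<int> \<and> qj q \<in> \<int> \<and> qk q \<in> \<int>"

text \<open>The normalisation \<open>Re(a d\<^sup>* + b c\<^sup>*) = 1\<close> holds for \<open>I\<close> and is preserved by right
  multiplication with \<open>T\<close> and \<open>\<tau>\<^sub>\<omega>\<close> since \<open>\<omega>\<close> is purely imaginary; it pins down the real scalar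
  in a projective class.\<close>
definition lipschitz_normal :: "qmat \<Rightarrow> bool" where
  "lipschitz_normal M \<longleftrightarrow> (case M of (a, b, c, d) \<Rightarrow>
     is_lipschitz a \<and> is_lipschitz b \<and> is_lipschitz c \<and> is_lipschitz d \<and> qinner a d + qinner b c = 1)"

lemma words_lipschitz_normal: "M \<in> words lipschitz_gens \<Longrightarrow> lipschitz_normal M"
proof (induction M rule: words.induct)
  case words_mid
  show ?case by (simp add: lipschitz_normal_def mid_def is_lipschitz_def qinner_def)
next
  case (words_snoc M g)
  obtain a b c d where M: "M = (a, b, c, d)" by (cases M)
  from words_snoc.hyps(2) consider "g = Tm" | w where "w \<in> ImHZ" "g = tau w"
    unfolding lipschitz_gens_def by blast
  then show ?case
  proof cases
    case 1
    then show ?thesis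
      using words_snoc.IH by (simp add: M lipschitz_normal_def mmul_def Tm_def add.commute)
  next
    case (2 w)
    then have "qre w = 0" "is_lipschitz w" by (simp_all add: ImHZ_iff is_lipschitz_def)
    then show ?thesis
      using words_snoc.IH 2(2)
      by (simp add: M lipschitz_normal_def mmul_def tau_def is_lipschitz_def qinner_def algebra_simps)
  qed
qed

lemma zeta_pow_not_dvd_3:
  assumes "\<not> 3 dvd n"
  shows "qinner (zeta ^ n) (zeta ^ n) = 1" "\<bar>qre (zeta ^ n)\<bar> = 1/2"
proof -
  have sign: "(- 1 :: quat) ^ (n div 3) = 1 \<or> (- 1 :: quat) ^ (n div 3) = - 1"
    by (cases "even (n div 3)") simp_all
  have "n mod 3 = 1 \<or> n mod 3 = 2" using assms by presburger
  then have "zeta ^ n \<in> {zeta, - zeta, zeta ^ 2, - (zeta ^ 2)}"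
    using sign by (subst zeta_pow_mod_3) auto
  then show "qinner (zeta ^ n) (zeta ^ n) = 1" "\<bar>qre (zeta ^ n)\<bar> = 1/2"
    unfolding zeta_square by (auto simp: zeta_def qinner_def)
qed

lemma Ints_abs_neq_half:
  fixes x :: real
  assumes "x \<in> \<int>"
  shows "\<bar>x\<bar> \<noteq> 1/2"
proof
  assume half: "\<bar>x\<bar> = 1/2"
  obtain z where "x = of_int z" using assms Ints_cases by blast
  then have "of_int (2 * \<bar>z\<bar>) = 2 * \<bar>x\<bar>" by simp
  also have "\<dots> = 1" using half by simp
  finally have "2 * \<bar>z\<bar> = 1" by (simp only: of_int_eq_1_iff)
  then show False by presburger
qed

lemma Dm_zeta_pow_in_PSL2_Lipschitz:
  assumes "pclass (Dm (zeta ^ n)) \<in> PSL2_Lipschitz"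
  shows "3 dvd n"
proof (rule ccontr)
  assume n: "\<not> 3 dvd n"
  obtain N where N: "N \<in> words lipschitz_gens" "pclass N = pclass (Dm (zeta ^ n))"
    using assms unfolding PSL2_Lipschitz_eq_words by auto
  then obtain r where "N = mscale r (Dm (zeta ^ n))"
    unfolding pclass_eq_iff by blast
  then have "lipschitz_normal (Dm (qscale r (zeta ^ n)))"
    using words_lipschitz_normal[OF N(1)] by (simp add: mscale_Dm)
  then have "qre (qscale r (zeta ^ n)) \<in> \<int>" "qinner (qscale r (zeta ^ n)) (qscale r (zeta ^ n)) = 1"
    by (simp_all add: lipschitz_normal_def Dm_def is_lipschitz_def qinner_def)
  moreover have "qinner (qscale r (zeta ^ n)) (qscale r (zeta ^ n)) = r\<^sup>2"
    using zeta_pow_not_dvd_3(1)[OF n] by (simp add: qinner_qscale)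
  ultimately have "\<bar>r\<bar> = 1" "qre (qscale r (zeta ^ n)) \<in> \<int>"
    by (auto simp: power2_eq_1_iff)
  moreover have "\<bar>qre (qscale r (zeta ^ n))\<bar> = \<bar>r\<bar> * (1/2)"
    using zeta_pow_not_dvd_3(2)[OF n] by (simp add: abs_mult)
  ultimately show False
    using Ints_abs_neq_half by simp
qed

section \<open>The cosets\<close>

lemma subgroup_PSL2_Hurwitz_PGL: "subgroup PSL2_Hurwitz PGL"
  unfolding PSL2_Hurwitz_def lipschitz_gens_def[symmetric] hurwitz_gens_def[symmetric]
  by (intro group.generate_is_subgroup group_PGL pclass_gens_in_PGL hurwitz_gens_inverse)

lemma PSL2_Lipschitz_subset_PSL2_Hurwitz: "PSL2_Lipschitz \<subseteq> PSL2_Hurwitz"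
  unfolding PSL2_Lipschitz_def PSL2_Hurwitz_def by (intro group.mono_generate group_PGL) auto

lemma PSL2H_grp_simps [simp]:
  "carrier PSL2H_grp = PSL2_Hurwitz" "mult PSL2H_grp = pmul" "one PSL2H_grp = pclass mid"
  by (simp_all add: PSL2H_grp_def)

lemma group_PSL2H_grp: "group PSL2H_grp"
  unfolding PSL2H_grp_def by (rule subgroup.subgroup_is_group[OF subgroup_PSL2_Hurwitz_PGL group_PGL])

lemma subgroup_PSL2_Lipschitz: "subgroup PSL2_Lipschitz PSL2H_grp"
proof -
  have "subgroup PSL2_Lipschitz PGL"
    unfolding PSL2_Lipschitz_def lipschitz_gens_def[symmetric]
    by (intro group.generate_is_subgroup group_PGL pclass_gens_in_PGL lipschitz_gens_inverse)
  then show ?thesis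
    unfolding PSL2H_grp_def
    by (intro group.subgroup_incl group_PGL subgroup_PSL2_Hurwitz_PGL PSL2_Lipschitz_subset_PSL2_Hurwitz)
qed

definition zeta_class :: "nat \<Rightarrow> qmat set" where
  "zeta_class n = pclass (Dm (zeta ^ n))"

lemma pmul_zeta_class: "pmul (zeta_class m) (zeta_class n) = zeta_class (m + n)"
  by (simp add: zeta_class_def Dm_mult power_add)

lemma zeta_class_in_PSL2_Hurwitz: "zeta_class n \<in> PSL2_Hurwitz"
proof -
  have "Dm (zeta ^ n) \<in> words hurwitz_gens"
  proof (induction n)
    case 0
    show ?case using words.words_mid by (simp add: Dm_one)
  next
    case (Suc n)
    have "Dm zeta \<in> hurwitz_gens"
      using zeta_in_hurwitz_units by (simp add: hurwitz_gens_def)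
    from words.words_snoc[OF Suc this] show ?case
      by (simp only: Dm_mult power_Suc2)
  qed
  then show ?thesis unfolding zeta_class_def PSL2_Hurwitz_eq_words by blast
qed

lemma rcoset_eq_zeta_class:
  assumes "x \<in> PSL2_Hurwitz"
  shows "\<exists>e<3. PSL2_Lipschitz #>\<^bsub>PSL2H_grp\<^esub> x = PSL2_Lipschitz #>\<^bsub>PSL2H_grp\<^esub> zeta_class e"
proof -
  obtain M where "M \<in> words hurwitz_gens" "x = pclass M"
    using assms unfolding PSL2_Hurwitz_eq_words by blast
  then obtain N e where N: "N \<in> words lipschitz_gens" "e < 3" and x: "x = pmul (pclass N) (zeta_class e)"
    using hurwitz_word_decomp by (fastforce simp: zeta_class_def)
  have N_L: "pclass N \<in> PSL2_Lipschitz"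
    using N(1) unfolding PSL2_Lipschitz_eq_words by blast
  then have N_H: "pclass N \<in> carrier PSL2H_grp"
    using PSL2_Lipschitz_subset_PSL2_Hurwitz by auto
  have "PSL2_Lipschitz #>\<^bsub>PSL2H_grp\<^esub> x
      = (PSL2_Lipschitz #>\<^bsub>PSL2H_grp\<^esub> pclass N) #>\<^bsub>PSL2H_grp\<^esub> zeta_class e"
    unfolding x using PSL2_Lipschitz_subset_PSL2_Hurwitz N_H zeta_class_in_PSL2_Hurwitz
    by (simp add: group.coset_mult_assoc[OF group_PSL2H_grp])
  also have "\<dots> = PSL2_Lipschitz #>\<^bsub>PSL2H_grp\<^esub> zeta_class e"
    using group.coset_join2[OF group_PSL2H_grp N_H subgroup_PSL2_Lipschitz N_L] by simp
  finally show ?thesis using N(2) by blast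
qed

lemma rcoset_zeta_class_inj:
  assumes "PSL2_Lipschitz #>\<^bsub>PSL2H_grp\<^esub> zeta_class e = PSL2_Lipschitz #>\<^bsub>PSL2H_grp\<^esub> zeta_class f"
    and "e < 3" "f < 3"
  shows "e = f"
proof -
  have "zeta_class e \<in> PSL2_Lipschitz #>\<^bsub>PSL2H_grp\<^esub> zeta_class f"
    using group.rcos_self[OF group_PSL2H_grp _ subgroup_PSL2_Lipschitz, of "zeta_class e"]
      zeta_class_in_PSL2_Hurwitz assms(1) by simp
  then obtain N where N: "N \<in> words lipschitz_gens" "zeta_class e = pmul (pclass N) (zeta_class f)"
    unfolding r_coset_def PSL2_Lipschitz_eq_words by auto
  have "zeta_class (e + (6 - f)) = pmul (pmul (pclass N) (zeta_class f)) (zeta_class (6 - f))"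
    by (simp only: N(2)[symmetric] pmul_zeta_class)
  also have "\<dots> = pclass (mmul N (Dm (zeta ^ 6)))"
    using assms(3) by (simp add: zeta_class_def mmul_assoc Dm_mult power_add[symmetric])
  also have "\<dots> = pclass N"
    using power_mult[of zeta 3 2] by (simp add: zeta_cube Dm_one)
  finally have "zeta_class (e + (6 - f)) \<in> PSL2_Lipschitz"
    using N(1) unfolding PSL2_Lipschitz_eq_words by blast
  then have "3 dvd e + (6 - f)"
    unfolding zeta_class_def by (rule Dm_zeta_pow_in_PSL2_Lipschitz)
  then show "e = f" using assms(2,3) by presburger
qed

theorem mainTheorem4:
  shows "subgroup PSL2_Lipschitz PSL2H_grp \<and> card (rcosets\<^bsub>PSL2H_grp\<^esub> PSL2_Lipschitz) = 3"
proof
  show "subgroup PSL2_Lipschitz PSL2H_grp" by (rule subgroup_PSL2_Lipschitz)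
  let ?coset = "\<lambda>e. PSL2_Lipschitz #>\<^bsub>PSL2H_grp\<^esub> zeta_class e"
  have "rcosets\<^bsub>PSL2H_grp\<^esub> PSL2_Lipschitz = ?coset ` {..<3}"
    unfolding RCOSETS_def using rcoset_eq_zeta_class zeta_class_in_PSL2_Hurwitz by fastforce
  moreover have "inj_on ?coset {..<3}"
    using rcoset_zeta_class_inj by (intro inj_onI) blast
  ultimately show "card (rcosets\<^bsub>PSL2H_grp\<^esub> PSL2_Lipschitz) = 3"
    by (simp add: card_image)
qed

end
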